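(* Let $0<\mu<L_{\max}^{-1}$ with $L_{\max}=\max_i\|A_i\|_2^2$, and let $\{x^n\}$ be generated by GAITA (as in the context) from any $x^0\in\mathbf{R}^N$. Then for all $n\in\mathbf{N}$, $$T_\lambda(x^n)-T_\lambda(x^{n+1})\geq\frac12\Big(\frac1\mu-L_{\max}\Big)\|x^n-x^{n+1}\|_2^2.$$
   Context: Let $A\in\mathbf{R}^{m\times N}$ have columns $A_1,\dots,A_N$, $y\in\mathbf{R}^m$, $\lambda>0$, $q\in(0,1)$, and $T_\lambda(x)=\frac12\|Ax-y\|_2^2+\lambda\sum_{i=1}^N|x_i|^q$. For a step size $\mu>0$ set $\tau_{\mu,q}=\frac{2-q}{2-2q}(2\lambda\mu(1-q))^{\frac{1}{2-q}}$ and $\eta_{\mu,q}=(2\lambda\mu(1-q))^{\frac{1}{2-q}}$. For $z\in\mathbf{R}$ let $prox_{\mu,\lambda|\cdot|^q}(z)=\arg\min_{v\in\mathbf{R}}\{\frac{(z-v)^2}{2\mu}+\lambda|v|^q\}$ (a single point when $|z|\neq\tau_{\mu,q}$). Define $\mathcal{T}(z,w)$ as the unique element of $prox_{\mu,\lambda|\cdot|^q}(z)$ if $|z|\neq\tau_{\mu,q}$, and, if $|z|=\tau_{\mu,q}$, as $sgn(z)\eta_{\mu,q}$ when $w\neq0$ and $0$ when $w=0$ ($sgn(0)=0$). GAITA: given $x^0\in\mathbf{R}^N$, for $n=0,1,2,\dots$ let $i=(n\bmod N)+1$, $z_i^n=x_i^n-\mu A_i^T(Ax^n-y)$, $x_i^{n+1}=\mathcal{T}(z_i^n,x_i^n)$,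 $x_j^{n+1}=x_j^n$ for $j\neq i$. *)

theory Defs
  imports "HOL-Analysis.Analysis"
begin

text \<open>Vectors in R^N are represented as functions nat => real, using coordinates 0..<N
  (0-based). The m x N matrix A is a function nat => nat => real, entries A r c with
  r < m, c < N; column c is (lambda r. A r c).\<close>

definition resid :: "nat \<Rightarrow> nat \<Rightarrow> (nat \<Rightarrow> nat \<Rightarrow> real) \<Rightarrow> (nat \<Rightarrow> real) \<Rightarrow> (nat \<Rightarrow> real) \<Rightarrow> nat \<Rightarrow> real"
  where "resid m N A y x r = (\<Sum>c<N. A r c * x c) - y r"

definition Tlam :: "nat \<Rightarrow> nat \<Rightarrow> (nat \<Rightarrow> nat \<Rightarrow> real) \<Rightarrow> (nat \<Rightarrow> real) \<Rightarrow> real \<Rightarrow> real \<Rightarrow> (nat \<Rightarrow> real) \<Rightarrow> real"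
  where "Tlam m N A y lam q x =
     (1/2) * (\<Sum>r<m. (resid m N A y x r)^2) + lam * (\<Sum>i<N. \<bar>x i\<bar> powr q)"

definition colnorm2 :: "nat \<Rightarrow> (nat \<Rightarrow> nat \<Rightarrow> real) \<Rightarrow> nat \<Rightarrow> real"
  where "colnorm2 m A i = (\<Sum>r<m. (A r i)^2)"

definition Lmax :: "nat \<Rightarrow> nat \<Rightarrow> (nat \<Rightarrow> nat \<Rightarrow> real) \<Rightarrow> real"
  where "Lmax m N A = Max ((\<lambda>i. colnorm2 m A i) ` {..<N})"

definition tau :: "real \<Rightarrow> real \<Rightarrow> real \<Rightarrow> real"
  where "tau lam mu q = (2 - q) / (2 - 2*q) * (2*lam*mu*(1-q)) powr (1/(2-q))"

definition eta :: "real \<Rightarrow> real \<Rightarrow> real \<Rightarrow> real"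
  where "eta lam mu q = (2*lam*mu*(1-q)) powr (1/(2-q))"

definition proxq :: "real \<Rightarrow> real \<Rightarrow> real \<Rightarrow> real \<Rightarrow> real set"
  where "proxq mu lam q z =
     {v. \<forall>u. (z-v)^2/(2*mu) + lam * \<bar>v\<bar> powr q \<le> (z-u)^2/(2*mu) + lam * \<bar>u\<bar> powr q}"

definition Tmap :: "real \<Rightarrow> real \<Rightarrow> real \<Rightarrow> real \<Rightarrow> real \<Rightarrow> real"
  where "Tmap mu lam q z w =
     (if \<bar>z\<bar> \<noteq> tau lam mu q then (THE v. v \<in> proxq mu lam q z)
      else if w \<noteq> 0 then sgn z * eta lam mu q else 0)"

definition is_gaita :: "nat \<Rightarrow> nat \<Rightarrow> (nat \<Rightarrow> nat \<Rightarrow> real) \<Rightarrow> (nat \<Rightarrow> real) \<Rightarrow> real \<Rightarrow> real \<Rightarrow> real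
    \<Rightarrow> (nat \<Rightarrow> nat \<Rightarrow> real) \<Rightarrow> bool"
  where "is_gaita m N A y lam q mu xs \<longleftrightarrow>
     (\<forall>n. let i = n mod N;
              z = xs n i - mu * (\<Sum>r<m. A r i * resid m N A y (xs n) r)
          in xs (Suc n) = (xs n)(i := Tmap mu lam q z (xs n i)))"

end

theory Submission
  imports Defs
begin

text \<open>Along the updated coordinate, T_lambda(x) - T_lambda(x') equals the decrease of the scalar
  proximal objective plus (1/2)(1/mu - ||A_i||^2) d^2, so it suffices that the thresholding map
  does not increase that objective. Since it is defined by THE for |z| \<noteq> tau, this needs the
  proximal set to be a singleton there: a positive minimiser v is stationary,
  z = v + lam mu q v^(q-1), and is no worse than 0 only if v \<ge> eta; on [eta, \<infinity>) the
  stationarity map is strictly increasing and sends eta to tau, the one input where 0 and eta tie.\<close>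

definition prox_obj :: "real \<Rightarrow> real \<Rightarrow> real \<Rightarrow> real \<Rightarrow> real \<Rightarrow> real" where
  "prox_obj mu lam q z v = (z - v)^2 / (2*mu) + lam * \<bar>v\<bar> powr q"

lemma proxq_iff_minimal:
  "v \<in> proxq mu lam q z \<longleftrightarrow> (\<forall>u. prox_obj mu lam q z v \<le> prox_obj mu lam q z u)"
  by (simp add: proxq_def prox_obj_def)

lemma prox_obj_uminus: "prox_obj mu lam q (- z) (- v) = prox_obj mu lam q z v"
  by (simp add: prox_obj_def power2_eq_square algebra_simps)

lemma proxq_uminus: "- v \<in> proxq mu lam q (- z) \<longleftrightarrow> v \<in> proxq mu lam q z"
  unfolding proxq_iff_minimal by (metis prox_obj_uminus minus_minus)

lemma proxq_nonempty:
  assumes "0 < mu" "0 < lam" "0 < q"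
  shows "\<exists>v. v \<in> proxq mu lam q z"
proof -
  let ?S = "cball (0::real) (2 * \<bar>z\<bar>)"
  have powr_cont: "continuous_on ?S (\<lambda>v. \<bar>v\<bar> powr q)"
    by (rule continuous_on_powr') (use assms in \<open>auto intro!: continuous_intros\<close>)
  have "continuous_on ?S (prox_obj mu lam q z)"
    unfolding prox_obj_def by (intro continuous_intros powr_cont) (use assms in auto)
  then obtain v where v: "\<forall>u\<in>?S. prox_obj mu lam q z v \<le> prox_obj mu lam q z u"
    using continuous_attains_inf[of ?S] by auto
  have "prox_obj mu lam q z v \<le> prox_obj mu lam q z u" for u
  proof (cases "u \<in> ?S")
    case False
    then have "2 * \<bar>z\<bar> < \<bar>u\<bar>" by simp
    then have "0 \<le> u * (u - 2*z)"
      by (cases "0 \<le> u") (auto intro: mult_nonpos_nonpos)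
    then have "z^2 \<le> (z - u)^2" by (simp add: power2_eq_square algebra_simps)
    moreover have "0 \<le> lam * \<bar>u\<bar> powr q" using assms by simp
    ultimately have "prox_obj mu lam q z 0 \<le> prox_obj mu lam q z u"
      using assms by (simp add: prox_obj_def add_increasing2 divide_right_mono)
    moreover have "prox_obj mu lam q z v \<le> prox_obj mu lam q z 0" using v by simp
    ultimately show ?thesis by linarith
  qed (use v in blast)
  then show ?thesis unfolding proxq_iff_minimal by blast
qed

lemma proxq_zero:
  assumes "0 < mu" "0 \<le> lam" "v \<in> proxq mu lam q 0"
  shows "v = 0"
proof (rule ccontr)
  assume "v \<noteq> 0"
  then have "prox_obj mu lam q 0 0 < prox_obj mu lam q 0 v"
    using assms(1,2) by (simp add: prox_obj_def add_pos_nonneg)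
  with assms(3) show False unfolding proxq_iff_minimal by (meson not_le)
qed

lemma proxq_nonneg:
  assumes "0 < mu" "0 < z" "v \<in> proxq mu lam q z"
  shows "0 \<le> v"
proof (rule ccontr)
  assume "\<not> 0 \<le> v"
  then have "(z - (- v))^2 < (z - v)^2"
    using assms(2) by (simp add: power2_eq_square algebra_simps mult_neg_pos)
  then have "prox_obj mu lam q z (- v) < prox_obj mu lam q z v"
    using assms(1) by (simp add: prox_obj_def divide_strict_right_mono)
  with assms(3) show False unfolding proxq_iff_minimal by (meson not_le)
qed

text \<open>The input z at which v > 0 is a stationary point of the proximal objective.\<close>
definition prox_preimage :: "real \<Rightarrow> real \<Rightarrow> real \<Rightarrow> real \<Rightarrow> real" where
  "prox_preimage lam mu q v = v + lam * mu * q * v powr (q - 1)"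

lemma proxq_pos_stationary:
  assumes "0 < mu" "0 < v" "v \<in> proxq mu lam q z"
  shows "z = prox_preimage lam mu q v"
proof -
  let ?f = "\<lambda>t. (z - t)^2 / (2*mu) + lam * t powr q"
  have "DERIV ?f v :> 2 * (z - v) * (-1) / (2*mu) + lam * (q * v powr (q - 1))"
    using assms(1,2) by (auto intro!: derivative_eq_intros simp: field_simps)
  moreover have "\<forall>t. \<bar>v - t\<bar> < v \<longrightarrow> ?f v \<le> ?f t"
  proof (intro allI impI)
    fix t assume "\<bar>v - t\<bar> < v"
    then have "0 < t" by linarith
    with assms(2,3) show "?f v \<le> ?f t"
      unfolding proxq_iff_minimal prox_obj_def by (metis abs_of_pos)
  qed
  ultimately have "2 * (z - v) * (-1) / (2*mu) + lam * (q * v powr (q - 1)) = 0"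
    using DERIV_local_min assms(2) by blast
  then show ?thesis using assms(1) by (simp add: prox_preimage_def field_simps)
qed

lemma prox_obj_gap:
  assumes "0 < mu" "0 < v" "z = prox_preimage lam mu q v"
  shows "2*mu * (prox_obj mu lam q z v - prox_obj mu lam q z 0)
           = v * (2*lam*mu*(1-q) * v powr (q - 1) - v)"
proof -
  have "\<bar>v\<bar> powr q = v * v powr (q - 1)"
    using assms(2) powr_add[of v 1 "q - 1"] by simp
  then show ?thesis
    using assms by (simp add: prox_obj_def prox_preimage_def field_simps power2_eq_square)
qed

lemma proxq_pos_threshold:
  assumes "0 < mu" "0 < v" "v \<in> proxq mu lam q z"
  shows "2*lam*mu*(1-q) * v powr (q - 1) \<le> v"
proof -
  have "prox_obj mu lam q z v \<le> prox_obj mu lam q z 0"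
    using assms(3) unfolding proxq_iff_minimal by blast
  then have "2*mu * (prox_obj mu lam q z v - prox_obj mu lam q z 0) \<le> 0"
    using assms(1) by (simp add: mult_nonneg_nonpos)
  then have "v * (2*lam*mu*(1-q) * v powr (q - 1) - v) \<le> 0"
    unfolding prox_obj_gap[OF assms(1,2) proxq_pos_stationary[OF assms]] .
  then show ?thesis using assms(2) by (simp add: mult_le_0_iff)
qed

lemma powr_le_powr_iff:
  fixes x y p :: real
  assumes "0 < p" "0 \<le> x" "0 \<le> y"
  shows "x powr p \<le> y powr p \<longleftrightarrow> x \<le> y"
  using assms by (meson not_le powr_less_mono2 powr_mono2 less_imp_le)

lemma powr_eq_powr_iff:
  fixes x y p :: real
  assumes "0 < p" "0 \<le> x" "0 \<le> y"
  shows "x powr p = y powr p \<longleftrightarrow> x = y"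
proof -
  have "x powr p = y powr p \<longleftrightarrow> x powr p \<le> y powr p \<and> y powr p \<le> x powr p" by auto
  then show ?thesis using powr_le_powr_iff[OF assms] powr_le_powr_iff[OF assms(1,3,2)] by auto
qed

locale lq_prox =
  fixes lam q mu :: real
  assumes lam_pos: "0 < lam" and q_pos: "0 < q" and q_less_1: "q < 1" and mu_pos: "0 < mu"
begin

lemma eta_pos: "0 < eta lam mu q"
  using lam_pos q_less_1 mu_pos by (simp add: eta_def)

lemma eta_powr: "eta lam mu q powr (2 - q) = 2*lam*mu*(1-q)"
  using lam_pos q_less_1 mu_pos by (simp add: eta_def powr_powr)

lemma threshold_iff:
  assumes "0 < v"
  shows "2*lam*mu*(1-q) * v powr (q - 1) \<le> v \<longleftrightarrow> eta lam mu q \<le> v"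
    and "2*lam*mu*(1-q) * v powr (q - 1) = v \<longleftrightarrow> v = eta lam mu q"
proof -
  have split: "v = v powr (q - 1) * v powr (2 - q)"
    using assms powr_add[of v "q - 1" "2 - q"] by simp
  have pos: "0 < v powr (q - 1)" using assms by simp
  have "2*lam*mu*(1-q) * v powr (q - 1) \<le> v \<longleftrightarrow> eta lam mu q powr (2 - q) \<le> v powr (2 - q)"
    using pos by (subst split) (simp add: eta_powr mult.commute)
  then show "2*lam*mu*(1-q) * v powr (q - 1) \<le> v \<longleftrightarrow> eta lam mu q \<le> v"
    using powr_le_powr_iff[of "2 - q"] eta_pos assms q_less_1 by simp
  have "2*lam*mu*(1-q) * v powr (q - 1) = v \<longleftrightarrow> v powr (2 - q) = eta lam mu q powr (2 - q)"
    using pos by (subst (2) split) (auto simp: eta_powr mult.commute)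
  then show "2*lam*mu*(1-q) * v powr (q - 1) = v \<longleftrightarrow> v = eta lam mu q"
    using powr_eq_powr_iff[of "2 - q"] eta_pos assms q_less_1 by simp
qed

lemma prox_preimage_eta: "prox_preimage lam mu q (eta lam mu q) = tau lam mu q"
proof -
  have "2*lam*mu*(1-q) * eta lam mu q powr (q - 1) = eta lam mu q"
    using threshold_iff(2)[OF eta_pos] by simp
  then have eta_powr_q1: "eta lam mu q powr (q - 1) = eta lam mu q / (2*lam*mu*(1-q))"
    using lam_pos q_less_1 mu_pos by (simp add: eq_divide_eq mult.commute)
  have "eta lam mu q + lam*mu*q * (eta lam mu q / (2*lam*mu*(1-q))) = (2 - q) / (2 - 2*q) * eta lam mu q"
    using lam_pos q_less_1 mu_pos by (simp add: field_simps)
  then show ?thesis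
    unfolding prox_preimage_def eta_powr_q1 by (simp add: tau_def eta_def)
qed

lemma tau_pos: "0 < tau lam mu q"
  using eta_pos q_less_1 by (simp add: tau_def eta_def)

lemma prox_preimage_strict_mono:
  assumes "eta lam mu q \<le> a" "a < b"
  shows "prox_preimage lam mu q a < prox_preimage lam mu q b"
  unfolding prox_preimage_def
proof (rule DERIV_pos_imp_increasing[OF assms(2)])
  fix x assume x: "a \<le> x" "x \<le> b"
  then have "0 < x" using eta_pos assms(1) by linarith
  then have "DERIV (\<lambda>x. x + lam*mu*q * x powr (q - 1)) x :> 1 + lam*mu*q * ((q - 1) * x powr (q - 2))"
    by (auto intro!: derivative_eq_intros)
  moreover have "lam*mu*q*(1-q) * x powr (q - 2) \<le> q / 2"
  proof -
    have "eta lam mu q powr (q - 2) = inverse (eta lam mu q powr (2 - q))"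
      by (metis minus_diff_eq powr_minus)
    then have "eta lam mu q powr (q - 2) = 1 / (2*lam*mu*(1-q))"
      by (simp add: eta_powr inverse_eq_divide)
    moreover have "x powr (q - 2) \<le> eta lam mu q powr (q - 2)"
      using eta_pos x assms(1) q_less_1 by (intro powr_mono2') auto
    ultimately have "lam*mu*q*(1-q) * x powr (q - 2) \<le> lam*mu*q*(1-q) * (1 / (2*lam*mu*(1-q)))"
      using lam_pos q_pos q_less_1 mu_pos by (intro mult_left_mono) auto
    also have "\<dots> = q / 2" using lam_pos q_less_1 mu_pos by (simp add: field_simps)
    finally show ?thesis .
  qed
  then have "0 < 1 + lam*mu*q * ((q - 1) * x powr (q - 2))"
    using q_less_1 by (simp add: algebra_simps)
  ultimately show "\<exists>y. DERIV (\<lambda>x. x + lam*mu*q * x powr (q - 1)) x :> y \<and> 0 < y"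
    by blast
qed

lemma prox_preimage_inj:
  assumes "eta lam mu q \<le> a" "eta lam mu q \<le> b"
    and "prox_preimage lam mu q a = prox_preimage lam mu q b"
  shows "a = b"
  using assms prox_preimage_strict_mono[of a b] prox_preimage_strict_mono[of b a]
  by (cases a b rule: linorder_cases) auto

lemma proxq_pos_ge_eta:
  assumes "0 < v" "v \<in> proxq mu lam q z"
  shows "eta lam mu q \<le> v"
  using proxq_pos_threshold[OF mu_pos assms] threshold_iff(1)[OF assms(1)] by simp

lemma proxq_zero_pos_tie:
  assumes "0 < v" "v \<in> proxq mu lam q z" "0 \<in> proxq mu lam q z"
  shows "z = tau lam mu q"
proof -
  have stat: "z = prox_preimage lam mu q v"
    using proxq_pos_stationary[OF mu_pos assms(1,2)] .
  have "prox_obj mu lam q z v = prox_obj mu lam q z 0"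
    using assms(2,3) unfolding proxq_iff_minimal by (meson order_antisym)
  then have "v * (2*lam*mu*(1-q) * v powr (q - 1) - v) = 0"
    using prox_obj_gap[OF mu_pos assms(1) stat] by simp
  then have "v = eta lam mu q"
    using threshold_iff(2)[OF assms(1)] assms(1) by simp
  then show ?thesis using stat prox_preimage_eta by simp
qed

lemma proxq_unique_pos:
  assumes "0 < z" "z \<noteq> tau lam mu q" "v \<in> proxq mu lam q z" "w \<in> proxq mu lam q z"
  shows "v = w"
proof -
  have pos_pos: "a = b" if "0 < a" "0 < b" "a \<in> proxq mu lam q z" "b \<in> proxq mu lam q z" for a b
  proof (rule prox_preimage_inj)
    show "eta lam mu q \<le> a" "eta lam mu q \<le> b" using proxq_pos_ge_eta that by auto
    show "prox_preimage lam mu q a = prox_preimage lam mu q b"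
      using proxq_pos_stationary[OF mu_pos] that by metis
  qed
  have no_tie: "a \<le> 0" if "a \<in> proxq mu lam q z" "0 \<in> proxq mu lam q z" for a
    using proxq_zero_pos_tie that assms(2) by (meson not_le)
  have "0 \<le> v" "0 \<le> w" using proxq_nonneg[OF mu_pos assms(1)] assms(3,4) by auto
  then consider "v = 0" "w = 0" | "0 < v" "0 < w" | "v = 0" "0 < w" | "0 < v" "w = 0"
    by linarith
  then show ?thesis
  proof cases
    case 2 then show ?thesis using pos_pos assms(3,4) by blast
  next
    case 3 then show ?thesis using no_tie assms(3,4) by fastforce
  next
    case 4 then show ?thesis using no_tie assms(3,4) by fastforce
  qed simp
qed

lemma proxq_unique:
  assumes "\<bar>z\<bar> \<noteq> tau lam mu q" "v \<in> proxq mu lam q z" "w \<in> proxq mu lam q z"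
  shows "v = w"
proof (cases z "0 :: real" rule: linorder_cases)
  case less
  then have "- v = - w"
    using proxq_unique_pos[of "- z" "- v" "- w"] proxq_uminus assms by simp
  then show ?thesis by simp
next
  case equal
  then show ?thesis using proxq_zero[OF mu_pos less_imp_le[OF lam_pos]] assms(2,3) by metis
next
  case greater
  then show ?thesis using proxq_unique_pos assms by simp
qed

lemma eta_in_proxq_tau: "eta lam mu q \<in> proxq mu lam q (tau lam mu q)"
proof -
  obtain v where v: "v \<in> proxq mu lam q (tau lam mu q)"
    using proxq_nonempty mu_pos lam_pos q_pos by blast
  consider "v = 0" | "0 < v" using proxq_nonneg[OF mu_pos tau_pos v] by linarith
  then show ?thesis
  proof cases
    case 1
    have "2*lam*mu*(1-q) * eta lam mu q powr (q - 1) = eta lam mu q"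
      using threshold_iff(2)[OF eta_pos] by simp
    then have "prox_obj mu lam q (tau lam mu q) (eta lam mu q) = prox_obj mu lam q (tau lam mu q) 0"
      using prox_obj_gap[OF mu_pos eta_pos prox_preimage_eta[symmetric]] mu_pos by simp
    then show ?thesis using v 1 unfolding proxq_iff_minimal by simp
  next
    case 2
    have "prox_preimage lam mu q v = prox_preimage lam mu q (eta lam mu q)"
      using proxq_pos_stationary[OF mu_pos 2 v] prox_preimage_eta by simp
    then have "v = eta lam mu q"
      using prox_preimage_inj proxq_pos_ge_eta[OF 2 v] by blast
    then show ?thesis using v by simp
  qed
qed

lemma prox_obj_Tmap_le: "prox_obj mu lam q z (Tmap mu lam q z w) \<le> prox_obj mu lam q z w"
proof (cases "\<bar>z\<bar> = tau lam mu q")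
  case False
  obtain v where "v \<in> proxq mu lam q z"
    using proxq_nonempty mu_pos lam_pos q_pos by blast
  then have "\<exists>!v. v \<in> proxq mu lam q z" using proxq_unique[OF False] by blast
  then have "(THE v. v \<in> proxq mu lam q z) \<in> proxq mu lam q z" by (rule theI')
  then show ?thesis using False unfolding Tmap_def proxq_iff_minimal by simp
next
  case True
  have "sgn z * eta lam mu q \<in> proxq mu lam q z"
  proof (cases "0 < z")
    case False
    then have "z = - tau lam mu q" using True tau_pos by linarith
    then show ?thesis using eta_in_proxq_tau proxq_uminus tau_pos by simp
  qed (use True eta_in_proxq_tau in simp)
  then show ?thesis using True unfolding Tmap_def proxq_iff_minimal by simp
qed

end

lemma sum_fun_upd_diff:
  fixes f :: "nat \<Rightarrow> 'a \<Rightarrow> 'b :: ab_group_add"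
  assumes "i < N"
  shows "(\<Sum>j<N. f j ((x(i := v)) j)) = (\<Sum>j<N. f j (x j)) + (f i v - f i (x i))"
proof -
  have "(\<Sum>j<N. f j ((x(i := v)) j)) = (\<Sum>j<N. f j (x j) + (if j = i then f i v - f i (x i) else 0))"
    by (rule sum.cong) auto
  then show ?thesis using assms by (simp add: sum.distrib)
qed

lemma resid_fun_upd:
  assumes "i < N"
  shows "resid m N A y (x(i := v)) r = resid m N A y x r + A r i * (v - x i)"
  using sum_fun_upd_diff[OF assms, of "\<lambda>c t. A r c * t" x v]
  by (simp add: resid_def algebra_simps)

lemma Tlam_fun_upd:
  assumes "i < N"
  shows "Tlam m N A y lam q (x(i := v)) = Tlam m N A y lam q x
           + (v - x i) * (\<Sum>r<m. A r i * resid m N A y x r)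
           + colnorm2 m A i * (v - x i)^2 / 2
           + lam * \<bar>v\<bar> powr q - lam * \<bar>x i\<bar> powr q"
proof -
  have "(\<Sum>r<m. (resid m N A y (x(i := v)) r)^2)
      = (\<Sum>r<m. (resid m N A y x r)^2 + 2 * (v - x i) * (A r i * resid m N A y x r)
                 + (v - x i)^2 * (A r i)^2)"
    by (rule sum.cong) (simp_all add: resid_fun_upd[OF assms] power2_eq_square algebra_simps)
  also have "\<dots> = (\<Sum>r<m. (resid m N A y x r)^2)
        + 2 * (v - x i) * (\<Sum>r<m. A r i * resid m N A y x r) + (v - x i)^2 * colnorm2 m A i"
    by (simp add: sum.distrib sum_distrib_left colnorm2_def)
  finally have squares: "(\<Sum>r<m. (resid m N A y (x(i := v)) r)^2) = \<dots>" .
  show ?thesis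
    unfolding Tlam_def squares sum_fun_upd_diff[OF assms, of "\<lambda>_ t. \<bar>t\<bar> powr q" x v]
    by (simp add: algebra_simps)
qed

lemma colnorm2_le_Lmax: "i < N \<Longrightarrow> colnorm2 m A i \<le> Lmax m N A"
  unfolding Lmax_def by (rule Max_ge) auto

lemma coordinate_step_descent:
  assumes "i < N" "0 < mu"
    and g: "g = (\<Sum>r<m. A r i * resid m N A y x r)"
    and surrogate: "prox_obj mu lam q (x i - mu * g) v \<le> prox_obj mu lam q (x i - mu * g) (x i)"
  shows "Tlam m N A y lam q x - Tlam m N A y lam q (x(i := v))
           \<ge> (1/2) * (1/mu - colnorm2 m A i) * (x i - v)^2"
proof -
  have "(x i - mu * g - v)^2 / (2*mu) - (mu * g)^2 / (2*mu) = (v - x i)^2 / (2*mu) + (v - x i) * g"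
    using assms(2) by (simp add: field_simps power2_eq_square)
  then have "(v - x i)^2 / (2*mu) + (v - x i) * g \<le> lam * \<bar>x i\<bar> powr q - lam * \<bar>v\<bar> powr q"
    using surrogate by (simp add: prox_obj_def algebra_simps)
  moreover have "(1/2) * (1/mu - colnorm2 m A i) * (x i - v)^2
                   = (v - x i)^2 / (2*mu) - colnorm2 m A i * (v - x i)^2 / 2"
    by (simp add: field_simps power2_commute)
  ultimately show ?thesis
    using Tlam_fun_upd[OF assms(1), of m A y lam q x v] unfolding g[symmetric] by linarith
qed

theorem mainTheorem8:
  fixes m N :: nat and A :: "nat \<Rightarrow> nat \<Rightarrow> real" and y :: "nat \<Rightarrow> real"
    and lam q mu :: real and xs :: "nat \<Rightarrow> nat \<Rightarrow> real"
  assumes "0 < N" and "0 < lam" and "0 < q" and "q < 1"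
    and "0 < mu" and "mu * Lmax m N A < 1"
    and "is_gaita m N A y lam q mu xs"
  shows "Tlam m N A y lam q (xs n) - Tlam m N A y lam q (xs (Suc n))
           \<ge> (1/2) * (1/mu - Lmax m N A) * (\<Sum>i<N. (xs n i - xs (Suc n) i)^2)"
proof -
  interpret lq_prox lam q mu using assms(2-5) by unfold_locales
  define i where "i = n mod N"
  define g where "g = (\<Sum>r<m. A r i * resid m N A y (xs n) r)"
  define v where "v = Tmap mu lam q (xs n i - mu * g) (xs n i)"
  have i: "i < N" using assms(1) by (simp add: i_def)
  have step: "xs (Suc n) = (xs n)(i := v)"
    using assms(7) by (simp add: is_gaita_def Let_def i_def g_def v_def)
  have "(1/2) * (1/mu - Lmax m N A) * (xs n i - v)^2 \<le> (1/2) * (1/mu - colnorm2 m A i) * (xs n i - v)^2"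
    using colnorm2_le_Lmax[OF i] by (intro mult_right_mono) auto
  also have "\<dots> \<le> Tlam m N A y lam q (xs n) - Tlam m N A y lam q (xs (Suc n))"
    unfolding step v_def
    by (rule coordinate_step_descent[OF i assms(5) g_def prox_obj_Tmap_le])
  finally show ?thesis
    using sum_fun_upd_diff[OF i, of "\<lambda>j t. (xs n j - t)^2" "xs n" v] by (simp add: step)
qed

end
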